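(* For every prime $p>7$, $$\sum_{k=1}^{\frac{p-1}{2}}\frac{2H_{2k}-H_k}{k^4}\equiv\frac{31}{2}B_{p-5}\pmod p.$$
   Context: $H_n=\sum_{j=1}^n 1/j$. Bernoulli numbers: $\sum_{n\ge0}B_nt^n/n!=t/(e^t-1)$. Congruences are between $p$-adic integers. *)

theory Defs
  imports "HOL-Analysis.Analysis" "HOL-Computational_Algebra.Formal_Power_Series"
begin

definition bernoulli_num :: "nat \<Rightarrow> rat" where
  "bernoulli_num n = fact n * fps_nth (fps_X / (fps_exp 1 - 1)) n"

definition harm_rat :: "nat \<Rightarrow> rat" where
  "harm_rat n = (\<Sum>j=1..n. 1 / of_nat j)"

text \<open>Congruence of rationals modulo p, in the ring of p-integral rationals
  (= congruence of p-adic integers): a - b, written in lowest terms, has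
  denominator prime to p and numerator divisible by p.\<close>
definition rat_cong_mod :: "rat \<Rightarrow> rat \<Rightarrow> nat \<Rightarrow> bool" where
  "rat_cong_mod a b p =
     (case quotient_of (a - b) of (n, d) \<Rightarrow> int p dvd n \<and> coprime d (int p))"

end

theory Submission
  imports Defs "HOL-Number_Theory.Number_Theory"
begin

text \<open>
  Let \<open>A n = (H (n-1) + H n) / 2 = H n - 1/(2n)\<close>. Since \<open>H (p-1-n) \<equiv> H n (mod p)\<close>,
  \<open>A (p-n) \<equiv> A n\<close>, so \<open>f n = A n / n^4\<close> is symmetric under \<open>n \<mapsto> p - n\<close>. Hence both
  \<open>\<Sum>k\<le>(p-1)/2. f k\<close> and \<open>\<Sum>k\<le>(p-1)/2. f (2k)\<close> are congruent to half of \<open>\<Sum>n<p. f n\<close>,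
  and the sum in question is \<open>32 \<Sum>f (2k) - \<Sum>f k \<equiv> (16 - 1/2) \<Sum>n<p. f n\<close>.
  By Fermat, \<open>H (n-1) \<equiv> \<Sum>k<n. k^(p-2)\<close>, a polynomial in \<open>n\<close> with Bernoulli coefficients
  (Faulhaber); summing it against \<open>n^(p-5)\<close> and using \<open>\<Sum>n<p. n^e \<equiv> -[p-1 | e]\<close> leaves
  \<open>\<Sum>n<p. H (n-1)/n^4 \<equiv> B (p-5)\<close>, while \<open>\<Sum>n<p. 1/n^5 \<equiv> 0\<close>.
\<close>

lemma bernoulli_egf_mult: "fps_X / (fps_exp 1 - 1) * (fps_exp 1 - 1) = (fps_X :: rat fps)"
proof -
  have "fps_nth (fps_exp 1 - 1 :: rat fps) 1 \<noteq> 0"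
    by simp
  then have "fps_exp 1 - 1 \<noteq> (0 :: rat fps)" and "subdegree (fps_exp 1 - 1 :: rat fps) \<le> 1"
    by (auto intro: subdegree_leI)
  then show ?thesis
    by (intro fps_times_divide_eq) auto
qed

definition bernpoly :: "nat \<Rightarrow> rat \<Rightarrow> rat" where
  "bernpoly n x = (\<Sum>i\<le>n. of_nat (n choose i) * bernoulli_num i * x ^ (n - i))"

lemma bernpoly_conv_fps:
  "bernpoly n x = fact n * fps_nth (fps_X / (fps_exp 1 - 1) * fps_exp x) n"
proof -
  have "fact n * fps_nth (fps_X / (fps_exp 1 - 1) * fps_exp x) n
      = (\<Sum>i\<le>n. fact n * (fps_nth (fps_X / (fps_exp 1 - 1)) i * (x ^ (n - i) / fact (n - i))))"
    by (simp add: fps_mult_nth sum_distrib_left atLeast0AtMost)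
  also have "\<dots> = bernpoly n x"
    unfolding bernpoly_def
    by (intro sum.cong refl) (simp add: binomial_fact bernoulli_num_def field_simps)
  finally show ?thesis ..
qed

lemma bernpoly_diff: "bernpoly n (x + 1) - bernpoly n x = of_nat n * x ^ (n - 1)"
proof -
  have "bernpoly n (x + 1) - bernpoly n x
      = fact n * fps_nth (fps_X / (fps_exp 1 - 1) * (fps_exp 1 - 1) * fps_exp x) n"
    by (simp add: bernpoly_conv_fps fps_exp_add_mult algebra_simps)
  also have "\<dots> = fact n * fps_nth (fps_X * fps_exp x) n"
    by (simp only: bernoulli_egf_mult)
  also have "\<dots> = of_nat n * x ^ (n - 1)"
    by (cases n) (auto simp: fact_Suc field_simps)
  finally show ?thesis .
qed

lemma bernpoly_Suc_minus_0:
  "bernpoly (Suc m) x - bernpoly (Suc m) 0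
     = (\<Sum>i\<le>m. of_nat (Suc m choose i) * bernoulli_num i * x ^ (Suc m - i))"
proof -
  have "(\<Sum>i\<le>m. of_nat (Suc m choose i) * bernoulli_num i * (0::rat) ^ (Suc m - i)) = 0"
    by (intro sum.neutral) auto
  then show ?thesis
    by (simp add: bernpoly_def)
qed

lemma sum_of_powers_bernoulli:
  "(\<Sum>k<n. (of_nat k :: rat) ^ m)
     = (\<Sum>i\<le>m. of_nat (Suc m choose i) * bernoulli_num i * of_nat n ^ (Suc m - i)) / of_nat (Suc m)"
proof -
  have "(\<Sum>k<n. (of_nat k :: rat) ^ m)
      = (bernpoly (Suc m) (of_nat n) - bernpoly (Suc m) 0) / of_nat (Suc m)"
  proof (induction n)
    case (Suc n)
    have "bernpoly (Suc m) (of_nat n + 1) - bernpoly (Suc m) (of_nat n) = of_nat (Suc m) * of_nat n ^ m"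
      using bernpoly_diff [of "Suc m" "of_nat n"] by simp
    with Suc show ?case
      by (simp add: field_simps)
  qed simp
  then show ?thesis
    by (simp only: bernpoly_Suc_minus_0)
qed

lemma bernoulli_num_recurrence:
  "(\<Sum>i\<le>n. of_nat (Suc n choose i) * bernoulli_num i) = (if n = 0 then 1 else 0)"
  using bernpoly_diff [of "Suc n" 0] bernpoly_Suc_minus_0 [of n 1] by simp

lemma harm_rat_0 [simp]: "harm_rat 0 = 0"
  by (simp add: harm_rat_def)

lemma harm_rat_Suc: "harm_rat (Suc n) = harm_rat n + 1 / of_nat (Suc n)"
  by (simp add: harm_rat_def)

definition harm_avg :: "nat \<Rightarrow> rat" where
  "harm_avg n = (harm_rat (n - 1) + harm_rat n) / 2"

lemma harm_avg_eq_pred: "0 < n \<Longrightarrow> harm_avg n = harm_rat (n - 1) + 1 / (2 * of_nat n)"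
  using harm_rat_Suc [of "n - 1"] by (simp add: harm_avg_def)

lemma harm_avg_eq: "0 < n \<Longrightarrow> harm_avg n = harm_rat n - 1 / (2 * of_nat n)"
  using harm_rat_Suc [of "n - 1"] by (simp add: harm_avg_def)

lemma harm_rat_double_div_power_eq:
  assumes "0 < k"
  shows "(2 * harm_rat (2 * k) - harm_rat k) / of_nat k ^ 4
    = 32 * (harm_avg (2 * k) / of_nat (2 * k) ^ 4) - harm_avg k / of_nat k ^ 4"
proof -
  have "(of_nat (2 * k) :: rat) ^ 4 = 16 * of_nat k ^ 4"
    by simp
  moreover have "harm_avg (2 * k) = harm_rat (2 * k) - 1 / (4 * of_nat k)"
    using harm_avg_eq [of "2 * k"] assms by simp
  moreover have "harm_avg k = harm_rat k - 1 / (2 * of_nat k)"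
    using harm_avg_eq [of k] assms by simp
  ultimately show ?thesis
    using assms by (simp only:) (simp add: field_simps)
qed

lemma sum_split_even_odd:
  fixes f :: "nat \<Rightarrow> 'a :: comm_monoid_add"
  shows "(\<Sum>n=1..2*h. f n) = (\<Sum>k=1..h. f (2 * k)) + (\<Sum>k=1..h. f (2 * k - 1))"
proof (induction h)
  case (Suc h)
  have "{1..2 * Suc h} = insert (2 * h + 2) (insert (2 * h + 1) {1..2 * h})"
    by auto
  with Suc show ?case
    by (simp add: add_ac)
qed simp

definition p_integral :: "nat \<Rightarrow> rat \<Rightarrow> bool" where
  "p_integral p x \<longleftrightarrow> (\<exists>a b. x = of_int a / of_int b \<and> \<not> int p dvd b)"

definition p_cong :: "nat \<Rightarrow> rat \<Rightarrow> rat \<Rightarrow> bool" where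
  "p_cong p x y \<longleftrightarrow> p_integral p ((x - y) / of_nat p)"

context
  fixes p :: nat
  assumes prime_p: "prime p"
begin

lemma not_dvd_mult: "\<not> int p dvd a \<Longrightarrow> \<not> int p dvd b \<Longrightarrow> \<not> int p dvd (a * b)"
  using prime_p by (simp add: prime_dvd_mult_iff)

lemma p_integral_of_int [simp]: "p_integral p (of_int a)"
proof -
  have "\<not> int p dvd 1"
    using prime_p by (simp add: prime_nat_iff)
  then show ?thesis
    unfolding p_integral_def by (intro exI [of _ a] exI [of _ 1]) simp
qed

lemma p_integral_of_nat [simp]: "p_integral p (of_nat a)"
  using p_integral_of_int [of "int a"] by simp

lemma p_integral_numeral [simp]: "p_integral p (numeral n)"
  using p_integral_of_nat [of "numeral n"] by simp

lemma p_integral_0 [simp]: "p_integral p 0" and p_integral_1 [simp]: "p_integral p 1"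
  using p_integral_of_nat [of 0] p_integral_of_nat [of 1] by simp_all

lemma p_integral_add [simp]: "p_integral p x \<Longrightarrow> p_integral p y \<Longrightarrow> p_integral p (x + y)"
proof -
  assume "p_integral p x" "p_integral p y"
  then obtain a b c d where x: "x = of_int a / of_int b" "\<not> int p dvd b"
    and y: "y = of_int c / of_int d" "\<not> int p dvd d"
    unfolding p_integral_def by blast
  moreover have "b \<noteq> 0" "d \<noteq> 0"
    using x(2) y(2) by auto
  ultimately have "x + y = of_int (a * d + c * b) / of_int (b * d)"
    by (simp add: field_simps)
  with not_dvd_mult [OF x(2) y(2)] show ?thesis
    unfolding p_integral_def by blast
qed

lemma p_integral_mult [simp]: "p_integral p x \<Longrightarrow> p_integral p y \<Longrightarrow> p_integral p (x * y)"
proof -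
  assume "p_integral p x" "p_integral p y"
  then obtain a b c d where x: "x = of_int a / of_int b" "\<not> int p dvd b"
    and y: "y = of_int c / of_int d" "\<not> int p dvd d"
    unfolding p_integral_def by blast
  then have "x * y = of_int (a * c) / of_int (b * d)"
    by simp
  with not_dvd_mult [OF x(2) y(2)] show ?thesis
    unfolding p_integral_def by blast
qed

lemma p_integral_uminus [simp]: "p_integral p x \<Longrightarrow> p_integral p (- x)"
  using p_integral_mult [OF p_integral_of_int [of "- 1"], of x] by simp

lemma p_integral_diff [simp]: "p_integral p x \<Longrightarrow> p_integral p y \<Longrightarrow> p_integral p (x - y)"
  using p_integral_add [of x "- y"] by simp

lemma p_integral_power [simp]: "p_integral p x \<Longrightarrow> p_integral p (x ^ n)"
  by (induction n) simp_all

lemma p_integral_sum: "(\<And>i. i \<in> A \<Longrightarrow> p_integral p (f i)) \<Longrightarrow> p_integral p (sum f A)"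
  by (induction A rule: infinite_finite_induct) simp_all

lemma p_integral_divide_of_nat:
  assumes "p_integral p x" "0 < k" "k < p"
  shows "p_integral p (x / of_nat k)"
proof -
  obtain a b where x: "x = of_int a / of_int b" "\<not> int p dvd b"
    using assms(1) unfolding p_integral_def by blast
  have "\<not> int p dvd int k"
    using assms(2,3) by (auto dest: dvd_imp_le)
  moreover have "x / of_nat k = of_int a / of_int (b * int k)"
    using x by simp
  ultimately show ?thesis
    using not_dvd_mult [OF x(2)] unfolding p_integral_def by blast
qed

lemma p_integral_inverse_power: "0 < k \<Longrightarrow> k < p \<Longrightarrow> p_integral p (1 / of_nat k ^ m)"
  using p_integral_power [OF p_integral_divide_of_nat [OF p_integral_1], of k m]
  by (simp add: power_one_over)

lemma p_cong_refl [simp]: "p_cong p x x"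
  by (simp add: p_cong_def)

lemma p_cong_sym: "p_cong p x y \<Longrightarrow> p_cong p y x"
  unfolding p_cong_def using p_integral_uminus [of "(x - y) / of_nat p"] by (simp add: minus_divide_left)

lemma p_cong_trans [trans]: "p_cong p x y \<Longrightarrow> p_cong p y z \<Longrightarrow> p_cong p x z"
  unfolding p_cong_def using p_integral_add [of "(x - y) / of_nat p" "(y - z) / of_nat p"]
  by (simp add: add_divide_distrib [symmetric])

lemma p_cong_add: "p_cong p x y \<Longrightarrow> p_cong p u v \<Longrightarrow> p_cong p (x + u) (y + v)"
  unfolding p_cong_def using p_integral_add [of "(x - y) / of_nat p" "(u - v) / of_nat p"]
  by (simp add: add_divide_distrib [symmetric] algebra_simps)

lemma p_cong_diff: "p_cong p x y \<Longrightarrow> p_cong p u v \<Longrightarrow> p_cong p (x - u) (y - v)"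
  unfolding p_cong_def using p_integral_diff [of "(x - y) / of_nat p" "(u - v) / of_nat p"]
  by (simp add: diff_divide_distrib [symmetric] algebra_simps)

lemma p_cong_mult_left: "p_integral p c \<Longrightarrow> p_cong p x y \<Longrightarrow> p_cong p (c * x) (c * y)"
  unfolding p_cong_def using p_integral_mult [of c "(x - y) / of_nat p"]
  by (simp add: algebra_simps)

lemma p_cong_mult:
  assumes "p_cong p x y" "p_cong p u v" "p_integral p x" "p_integral p v"
  shows "p_cong p (x * u) (y * v)"
proof -
  have "p_cong p (x * u) (x * v)"
    using p_cong_mult_left [OF assms(3,2)] .
  also have "p_cong p (x * v) (y * v)"
    using p_cong_mult_left [OF assms(4,1)] by (simp add: mult.commute)
  finally show ?thesis .
qed

lemma p_integral_if_p_cong: "p_cong p x y \<Longrightarrow> p_integral p y \<Longrightarrow> p_integral p x"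
proof -
  assume "p_cong p x y" "p_integral p y"
  moreover have "x = y + of_nat p * ((x - y) / of_nat p)"
    using prime_p by (simp add: prime_gt_0_nat)
  ultimately show ?thesis
    unfolding p_cong_def by (metis p_integral_add p_integral_mult p_integral_of_nat)
qed

lemma p_cong_divide_of_nat:
  assumes "p_cong p x y" "0 < k" "k < p"
  shows "p_cong p (x / of_nat k) (y / of_nat k)"
  using p_integral_divide_of_nat [of "(x - y) / of_nat p" k] assms
  unfolding p_cong_def by (simp add: diff_divide_distrib [symmetric] divide_divide_eq_left mult.commute)

lemma p_cong_power: "p_cong p x y \<Longrightarrow> p_integral p y \<Longrightarrow> p_cong p (x ^ n) (y ^ n)"
  by (induction n) (auto intro: p_cong_mult p_integral_if_p_cong)

lemma p_cong_sum: "(\<And>i. i \<in> A \<Longrightarrow> p_cong p (f i) (g i)) \<Longrightarrow> p_cong p (sum f A) (sum g A)"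
  unfolding p_cong_def using p_integral_sum [of A "\<lambda>i. (f i - g i) / of_nat p"]
  by (simp add: sum_divide_distrib [symmetric] sum_subtractf)

lemma p_cong_of_int:
  assumes "int p dvd a - b"
  shows "p_cong p (of_int a) (of_int b)"
proof -
  obtain k where "a - b = int p * k"
    using assms by (elim dvdE)
  then have "(of_int a - of_int b) / of_nat p = (of_int k :: rat)"
    using prime_gt_0_nat [OF prime_p] by (simp add: field_simps flip: of_int_diff)
  then show ?thesis
    unfolding p_cong_def by simp
qed

lemma rat_cong_mod_if_p_cong:
  assumes "p_cong p x y"
  shows "rat_cong_mod x y p"
proof -
  obtain a b where ab: "(x - y) / of_nat p = of_int a / of_int b" "\<not> int p dvd b"
    using assms unfolding p_cong_def p_integral_def by blast
  obtain n d where q: "quotient_of (x - y) = (n, d)"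
    by (cases "quotient_of (x - y)")
  have "d > 0" and "coprime n d" and "x - y = of_int n / of_int d"
    using quotient_of_denom_pos [OF q] quotient_of_coprime [OF q] quotient_of_div [OF q] by auto
  then have n: "of_int n = (x - y) * of_int d"
    by simp
  have "b \<noteq> 0" "p > 0"
    using ab(2) prime_gt_0_nat [OF prime_p] by auto
  then have a: "of_int a * of_nat p = (x - y) * of_int b"
    using ab(1) by (simp add: field_simps)
  have "of_int (n * b) = (x - y) * of_int b * (of_int d :: rat)"
    using n by simp
  also have "\<dots> = of_int (int p * a * d)"
    by (simp flip: a)
  finally have "of_int (n * b) = (of_int (int p * a * d) :: rat)" .
  then have "int p dvd n * b"
    by (simp only: of_int_eq_iff) (metis dvd_triv_left mult.assoc)
  then have "int p dvd n"
    using ab(2) prime_p by (simp add: prime_dvd_mult_iff)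
  moreover have "\<not> int p dvd d"
    using \<open>coprime n d\<close> \<open>int p dvd n\<close> prime_p
    by (metis coprime_common_divisor not_prime_unit prime_nat_int_transfer)
  then have "coprime d (int p)"
    using prime_imp_coprime [of "int p" d] prime_p by (simp add: coprime_commute)
  ultimately show ?thesis
    using q unfolding rat_cong_mod_def by simp
qed

lemma p_cong_power_add_pred:
  assumes "0 < k" "k < p"
  shows "p_cong p (of_nat k ^ (e + (p - 1))) (of_nat k ^ e)"
proof -
  have "\<not> p dvd k"
    using assms by (auto dest: dvd_imp_le)
  then have "[k ^ (p - 1) = 1] (mod p)"
    by (rule fermat_theorem [OF prime_p])
  then have "int p dvd int k ^ (p - 1) - 1"
    by (metis cong_iff_dvd_diff cong_int_iff of_nat_1 of_nat_power)
  then have "int p dvd int k ^ (e + (p - 1)) - int k ^ e"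
    by (metis dvd_mult mult.right_neutral power_add right_diff_distrib)
  then show ?thesis
    using p_cong_of_int by fastforce
qed

lemma p_cong_inverse_power:
  assumes "0 < k" "k < p" "m \<le> p - 1"
  shows "p_cong p (1 / of_nat k ^ m) (of_nat k ^ (p - 1 - m))"
proof -
  have "p_cong p (1 / of_nat k ^ m * of_nat k ^ (0 + (p - 1))) (1 / of_nat k ^ m * of_nat k ^ 0)"
    using assms by (intro p_cong_mult_left p_integral_inverse_power p_cong_power_add_pred)
  moreover have "p - 1 = p - 1 - m + m"
    using assms(3) by simp
  then have "(of_nat k :: rat) ^ (p - 1) = of_nat k ^ (p - 1 - m) * of_nat k ^ m"
    by (metis power_add)
  ultimately show ?thesis
    using assms(1) by (auto intro: p_cong_sym)
qed

lemma p_integral_bernoulli_num: "n \<le> p - 2 \<Longrightarrow> p_integral p (bernoulli_num n)"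
proof (induction n rule: less_induct)
  case (less n)
  have "(\<Sum>i\<le>n. of_nat (Suc n choose i) * bernoulli_num i)
      = (\<Sum>i<n. of_nat (Suc n choose i) * bernoulli_num i) + of_nat (Suc n) * bernoulli_num n"
    by (simp add: lessThan_Suc_atMost [symmetric])
  then have "bernoulli_num n
      = ((if n = 0 then 1 else 0) - (\<Sum>i<n. of_nat (Suc n choose i) * bernoulli_num i)) / of_nat (Suc n)"
    using bernoulli_num_recurrence [of n] by (simp add: field_simps)
  moreover have "p_integral p ((if n = 0 then 1 else 0) - (\<Sum>i<n. of_nat (Suc n choose i) * bernoulli_num i))"
    using less by (auto intro!: p_integral_diff p_integral_uminus p_integral_sum)
  ultimately show ?case
    using less.prems p_integral_divide_of_nat [of _ "Suc n"] prime_gt_1_nat [OF prime_p] by simp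
qed

lemma sum_powers_p_cong_0:
  assumes "1 \<le> e" "e \<le> p - 2"
  shows "p_cong p (\<Sum>k=1..p-1. (of_nat k :: rat) ^ e) 0"
proof -
  have "{..<p} = insert 0 {1..p-1}"
    using prime_gt_1_nat [OF prime_p] by auto
  then have "(\<Sum>k=1..p-1. (of_nat k :: rat) ^ e) = (\<Sum>k<p. of_nat k ^ e)"
    using assms(1) by simp
  also have "\<dots> = of_nat p * ((\<Sum>i\<le>e. of_nat (Suc e choose i) * bernoulli_num i * of_nat p ^ (e - i)) / of_nat (Suc e))"
    unfolding sum_of_powers_bernoulli
    by (simp add: sum_distrib_left Suc_diff_le mult.left_commute)
  finally have "(\<Sum>k=1..p-1. (of_nat k :: rat) ^ e) / of_nat p
      = (\<Sum>i\<le>e. of_nat (Suc e choose i) * bernoulli_num i * of_nat p ^ (e - i)) / of_nat (Suc e)"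
    using prime_gt_0_nat [OF prime_p] by simp
  moreover have "p_integral p \<dots>"
    using assms by (intro p_integral_divide_of_nat p_integral_sum) (auto intro!: p_integral_mult p_integral_bernoulli_num)
  ultimately show ?thesis
    unfolding p_cong_def by simp
qed

lemma sum_powers_p_cong:
  assumes "1 \<le> e" "e \<le> 2 * p - 3"
  shows "p_cong p (\<Sum>k=1..p-1. (of_nat k :: rat) ^ e) (if e = p - 1 then - 1 else 0)"
proof -
  consider "e \<le> p - 2" | "e = p - 1" | "p \<le> e"
    by linarith
  then show ?thesis
  proof cases
    case 1
    then show ?thesis
      using sum_powers_p_cong_0 assms prime_gt_1_nat [OF prime_p] by auto
  next
    case 2
    have "p_cong p (\<Sum>k=1..p-1. (of_nat k :: rat) ^ (0 + (p - 1))) (\<Sum>k=1..p-1. of_nat k ^ 0)"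
      by (intro p_cong_sum p_cong_power_add_pred) auto
    moreover have "p_cong p (of_int (int p - 1)) (of_int (- 1))"
      by (intro p_cong_of_int) simp
    ultimately show ?thesis
      using 2 prime_gt_1_nat [OF prime_p] by (auto simp: of_nat_diff intro: p_cong_trans)
  next
    case 3
    define e' where "e' = e - (p - 1)"
    have e': "e = e' + (p - 1)" "1 \<le> e'" "e' \<le> p - 2"
      using 3 assms by (auto simp: e'_def)
    have "p_cong p (\<Sum>k=1..p-1. (of_nat k :: rat) ^ e) (\<Sum>k=1..p-1. of_nat k ^ e')"
      unfolding e'(1) by (intro p_cong_sum p_cong_power_add_pred) auto
    also have "p_cong p \<dots> 0"
      using sum_powers_p_cong_0 e' by blast
    finally show ?thesis
      using 3 prime_gt_1_nat [OF prime_p] by auto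
  qed
qed

lemma sum_inverse_powers_p_cong_0:
  assumes "1 \<le> m" "m \<le> p - 2"
  shows "p_cong p (\<Sum>k=1..p-1. 1 / (of_nat k :: rat) ^ m) 0"
proof -
  have "p_cong p (\<Sum>k=1..p-1. 1 / (of_nat k :: rat) ^ m) (\<Sum>k=1..p-1. of_nat k ^ (p - 1 - m))"
    using assms by (intro p_cong_sum p_cong_inverse_power) auto
  also have "p_cong p \<dots> 0"
    using assms by (intro sum_powers_p_cong_0) auto
  finally show ?thesis .
qed

lemma p_integral_harm_rat: "n < p \<Longrightarrow> p_integral p (harm_rat n)"
  unfolding harm_rat_def using p_integral_inverse_power [of _ 1] by (auto intro!: p_integral_sum)

lemma harm_rat_p_cong_sum_powers:
  "n < p \<Longrightarrow> p_cong p (harm_rat n) (\<Sum>k=1..n. of_nat k ^ (p - 2))"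
  unfolding harm_rat_def using p_cong_inverse_power [of _ 1] by (auto intro!: p_cong_sum simp: numeral_2_eq_2)

lemma harm_rat_pred_p_cong_0: "2 < p \<Longrightarrow> p_cong p (harm_rat (p - 1)) 0"
  unfolding harm_rat_def using sum_inverse_powers_p_cong_0 [of 1] by simp

lemma inverse_p_cong_minus:
  assumes "0 < n" "n < p"
  shows "p_cong p (1 / of_nat (p - n)) (- (1 / of_nat n))"
proof -
  have "(1 / of_nat (p - n) - - (1 / of_nat n)) / of_nat p = (1 / of_nat (p - n) * (1 / of_nat n) :: rat)"
    using assms by (simp add: of_nat_diff field_simps)
  moreover have "p_integral p (1 / of_nat (p - n) * (1 / of_nat n))"
    using assms by (intro p_integral_mult p_integral_divide_of_nat p_integral_1) auto
  ultimately show ?thesis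
    unfolding p_cong_def by simp
qed

lemma harm_rat_reflect:
  assumes "2 < p" "0 < n" "n \<le> p"
  shows "p_cong p (harm_rat (p - n)) (harm_rat (n - 1))"
proof -
  from assms(2) have "1 \<le> n"
    by simp
  then show ?thesis
    using assms(3)
  proof (induction n rule: dec_induct)
    case base
    then show ?case
      using harm_rat_pred_p_cong_0 assms(1) by simp
  next
    case (step k)
    have "p - k = Suc (p - Suc k)"
      using step.prems by simp
    then have "harm_rat (p - Suc k) = harm_rat (p - k) - 1 / of_nat (p - k)"
      by (simp only: harm_rat_Suc)
    moreover have "harm_rat (Suc k - 1) = harm_rat (k - 1) - - (1 / of_nat k)"
      using step.hyps harm_rat_Suc [of "k - 1"] by simp
    moreover have "p_cong p (harm_rat (p - k) - 1 / of_nat (p - k)) (harm_rat (k - 1) - - (1 / of_nat k))"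
      using step by (intro p_cong_diff inverse_p_cong_minus) auto
    ultimately show ?case
      by (simp only:)
  qed
qed

lemma binomial_pred_prime_p_cong:
  "k < p \<Longrightarrow> p_cong p (of_nat (p - 1 choose k)) ((- 1) ^ k)"
proof (induction k)
  case (Suc k)
  have "of_nat (p - 1 choose Suc k) = of_nat (p choose Suc k) - (of_nat (p - 1 choose k) :: rat)"
    using binomial_Suc_Suc [of "p - 1" k] prime_gt_0_nat [OF prime_p] by simp
  moreover have "p_cong p (of_int (int (p choose Suc k))) (of_int 0)"
    using Suc.prems prime_p by (intro p_cong_of_int) (simp add: dvd_choose_prime)
  ultimately show ?case
    using Suc by (auto intro: p_cong_diff [where y = 0, simplified])
qed simp

lemma binomial_div_pred_p_cong:
  assumes "k < p"
  shows "p_cong p (- (of_nat (p - 1 choose k) / of_nat (p - 1))) ((- 1) ^ k)"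
proof -
  have "p_cong p (1 / of_nat (p - 1)) (- (1 / of_nat 1))"
    using prime_gt_1_nat [OF prime_p] by (intro inverse_p_cong_minus) auto
  then have "p_cong p (- 1 * (of_nat (p - 1 choose k) * (1 / of_nat (p - 1))))
      (- 1 * ((- 1) ^ k * - (1 / of_nat 1)))"
    using assms by (intro p_cong_mult_left p_cong_mult binomial_pred_prime_p_cong) auto
  then show ?thesis
    by simp
qed

text \<open>Summing a polynomial over \<open>1 \<le> n < p\<close> keeps only its coefficient of \<open>n^(p-1)\<close>.\<close>

lemma sum_powers_coeff_p_cong:
  assumes "\<And>i. i \<le> p - 2 \<Longrightarrow> p_integral p (c i)" "1 \<le> m" "m \<le> p - 1"
  shows "p_cong p (\<Sum>n=1..p-1. \<Sum>i\<le>p-2. c i * of_nat n ^ (2 * p - 2 - m - i)) (- c (p - 1 - m))"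
proof -
  have "(\<Sum>n=1..p-1. \<Sum>i\<le>p-2. c i * of_nat n ^ (2 * p - 2 - m - i))
      = (\<Sum>i\<le>p-2. c i * (\<Sum>n=1..p-1. of_nat n ^ (2 * p - 2 - m - i)))"
    by (subst sum.swap) (simp add: sum_distrib_left)
  also have "p_cong p \<dots> (\<Sum>i\<le>p-2. c i * (if i = p - 1 - m then - 1 else 0))"
  proof (intro p_cong_sum p_cong_mult_left)
    fix i
    assume "i \<in> {..p-2}"
    moreover have "p \<ge> 2"
      using prime_gt_1_nat [OF prime_p] by simp
    ultimately have "2 * p - 2 - m - i = p - 1 \<longleftrightarrow> i = p - 1 - m"
      and "1 \<le> 2 * p - 2 - m - i" "2 * p - 2 - m - i \<le> 2 * p - 3"
      using assms(2,3) by auto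
    then show "p_cong p (\<Sum>n=1..p-1. of_nat n ^ (2 * p - 2 - m - i)) (if i = p - 1 - m then - 1 else 0)"
      using sum_powers_p_cong [of "2 * p - 2 - m - i"] by presburger
    show "p_integral p (c i)"
      using assms(1) \<open>i \<in> {..p-2}\<close> by simp
  qed
  also have "(\<Sum>i\<le>p-2. c i * (if i = p - 1 - m then - 1 else 0)) = - c (p - 1 - m)"
    using assms(2) by (simp add: if_distrib [of "\<lambda>x. c _ * x"] sum.delta cong: if_cong)
  finally show ?thesis .
qed

lemma harm_rat_pred_p_cong_bernoulli:
  assumes "2 < p" "0 < n" "n < p"
  shows "p_cong p (harm_rat (n - 1))
    (\<Sum>i\<le>p-2. of_nat (p - 1 choose i) * bernoulli_num i / of_nat (p - 1) * of_nat n ^ (p - 1 - i))"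
proof -
  have "{..<n} = insert 0 {1..n-1}"
    using assms(2) by auto
  then have "(\<Sum>k=1..n-1. (of_nat k :: rat) ^ (p - 2)) = (\<Sum>k<n. of_nat k ^ (p - 2))"
    using assms(1) by simp
  also have "\<dots> = (\<Sum>i\<le>p-2. of_nat (p - 1 choose i) * bernoulli_num i / of_nat (p - 1) * of_nat n ^ (p - 1 - i))"
    unfolding sum_of_powers_bernoulli using assms(1)
    by (simp add: Suc_diff_Suc numeral_2_eq_2 sum_divide_distrib)
  finally show ?thesis
    using harm_rat_p_cong_sum_powers [of "n - 1"] assms by simp
qed

lemma sum_harm_rat_div_power_p_cong:
  assumes "2 < p" "1 \<le> m" "m \<le> p - 1"
  shows "p_cong p (\<Sum>n=1..p-1. harm_rat (n - 1) / of_nat n ^ m) ((- 1) ^ m * bernoulli_num (p - 1 - m))"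
proof -
  define c where "c i = of_nat (p - 1 choose i) * bernoulli_num i / of_nat (p - 1)" for i
  have c_integral: "p_integral p (c i)" if "i \<le> p - 2" for i
    unfolding c_def using that assms(1)
    by (intro p_integral_divide_of_nat p_integral_mult p_integral_bernoulli_num) auto
  have "p_cong p (\<Sum>n=1..p-1. harm_rat (n - 1) * (1 / of_nat n ^ m))
      (\<Sum>n=1..p-1. (\<Sum>i\<le>p-2. c i * of_nat n ^ (p - 1 - i)) * of_nat n ^ (p - 1 - m))"
    using assms unfolding c_def
    by (intro p_cong_sum p_cong_mult harm_rat_pred_p_cong_bernoulli p_cong_inverse_power p_integral_harm_rat)
      auto
  also have "\<dots> = (\<Sum>n=1..p-1. \<Sum>i\<le>p-2. c i * of_nat n ^ (2 * p - 2 - m - i))"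
  proof (rule sum.cong [OF refl])
    fix n
    have "c i * of_nat n ^ (p - 1 - i) * of_nat n ^ (p - 1 - m) = c i * of_nat n ^ (2 * p - 2 - m - i)"
      if "i \<le> p - 2" for i
    proof -
      have "p - 1 - i + (p - 1 - m) = 2 * p - 2 - m - i"
        using that assms by auto
      then show ?thesis
        by (simp add: mult.assoc flip: power_add)
    qed
    then show "(\<Sum>i\<le>p-2. c i * of_nat n ^ (p - 1 - i)) * of_nat n ^ (p - 1 - m)
        = (\<Sum>i\<le>p-2. c i * of_nat n ^ (2 * p - 2 - m - i))"
      unfolding sum_distrib_right by (intro sum.cong) auto
  qed
  also have "p_cong p \<dots> (- c (p - 1 - m))"
    using assms c_integral by (intro sum_powers_coeff_p_cong) auto
  also have "- c (p - 1 - m) = - (of_nat (p - 1 choose (p - 1 - m)) / of_nat (p - 1)) * bernoulli_num (p - 1 - m)"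
    by (simp add: c_def)
  also have "p_cong p \<dots> ((- 1) ^ (p - 1 - m) * bernoulli_num (p - 1 - m))"
    using assms
    by (intro p_cong_mult binomial_div_pred_p_cong p_cong_refl p_integral_bernoulli_num
        p_integral_uminus p_integral_divide_of_nat p_integral_of_nat) auto
  also have "(- 1 :: rat) ^ (p - 1 - m) = (- 1) ^ m"
    using prime_odd_nat [OF prime_p assms(1)] assms(1,3) by (auto simp: minus_one_power_iff)
  finally show ?thesis
    by simp
qed

lemma p_integral_harm_avg: "2 < p \<Longrightarrow> n < p \<Longrightarrow> p_integral p (harm_avg n)"
  unfolding harm_avg_def
  by (intro p_integral_divide_of_nat [of _ 2, simplified] p_integral_add p_integral_harm_rat) auto

lemma harm_avg_reflect:
  assumes "2 < p" "0 < n" "n < p"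
  shows "p_cong p (harm_avg (p - n)) (harm_avg n)"
proof -
  have "p_cong p (harm_rat (p - Suc n) + harm_rat (p - n)) (harm_rat (Suc n - 1) + harm_rat (n - 1))"
    using assms by (intro p_cong_add harm_rat_reflect) auto
  then have "p_cong p ((harm_rat (p - n - 1) + harm_rat (p - n)) / of_nat 2) ((harm_rat (n - 1) + harm_rat n) / of_nat 2)"
    using assms(1) by (intro p_cong_divide_of_nat) (auto simp: add.commute)
  then show ?thesis
    by (simp add: harm_avg_def)
qed

lemma sum_harm_avg_div_power_p_cong:
  assumes "1 \<le> m" "m \<le> p - 3"
  shows "p_cong p (\<Sum>n=1..p-1. harm_avg n / of_nat n ^ m) ((- 1) ^ m * bernoulli_num (p - 1 - m))"
proof -
  have "harm_avg n / of_nat n ^ m = harm_rat (n - 1) / of_nat n ^ m + 1 / 2 * (1 / of_nat n ^ Suc m)"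
    if "0 < n" for n
    using that by (simp add: harm_avg_eq_pred field_simps)
  then have "(\<Sum>n=1..p-1. harm_avg n / of_nat n ^ m)
      = (\<Sum>n=1..p-1. harm_rat (n - 1) / of_nat n ^ m) + 1 / 2 * (\<Sum>n=1..p-1. 1 / of_nat n ^ Suc m)"
    by (simp add: sum.distrib sum_distrib_left)
  also have "p_cong p \<dots> ((- 1) ^ m * bernoulli_num (p - 1 - m) + 1 / 2 * 0)"
    using assms prime_gt_1_nat [OF prime_p]
    by (intro p_cong_add p_cong_mult_left sum_harm_rat_div_power_p_cong sum_inverse_powers_p_cong_0
        p_integral_divide_of_nat [of 1 2, simplified]) auto
  finally show ?thesis
    by simp
qed

lemma harm_avg_div_power_reflect:
  assumes "2 < p" "0 < n" "n < p" "even m"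
  shows "p_cong p (harm_avg (p - n) / of_nat (p - n) ^ m) (harm_avg n / of_nat n ^ m)"
proof -
  have "p_cong p (harm_avg (p - n) * (1 / of_nat (p - n)) ^ m) (harm_avg n * (- (1 / of_nat n)) ^ m)"
    using assms
    by (intro p_cong_mult p_cong_power harm_avg_reflect inverse_p_cong_minus p_integral_harm_avg
        p_integral_power p_integral_uminus p_integral_divide_of_nat p_integral_1) auto
  then show ?thesis
    using assms(4) by (simp add: power_one_over)
qed

lemma sum_lower_half_p_cong:
  assumes "odd p" "\<And>n. 0 < n \<Longrightarrow> n < p \<Longrightarrow> p_cong p (f (p - n)) (f n)"
  shows "p_cong p (2 * (\<Sum>k=1..(p - 1) div 2. f k)) (\<Sum>n=1..p-1. f n)"
proof -
  define h where "h = (p - 1) div 2"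
  have p: "p = 2 * h + 1"
    using assms(1) by (simp add: h_def)
  have "{1..p-1} = {1..h} \<union> {h+1..2*h}"
    using p by auto
  then have "(\<Sum>n=1..p-1. f n) = (\<Sum>k=1..h. f k) + (\<Sum>n=h+1..2*h. f n)"
    by (simp add: sum.union_disjoint)
  also have "(\<Sum>n=h+1..2*h. f n) = (\<Sum>k=1..h. f (p - k))"
    by (rule sum.reindex_bij_witness [where i = "\<lambda>k. p - k" and j = "\<lambda>n. p - n"]) (use p in auto)
  finally have split: "(\<Sum>n=1..p-1. f n) = (\<Sum>k=1..h. f k) + (\<Sum>k=1..h. f (p - k))" .
  have "p_cong p (\<Sum>k=1..h. f (p - k)) (\<Sum>k=1..h. f k)"
    using p by (intro p_cong_sum assms(2)) auto
  then have "p_cong p (\<Sum>n=1..p-1. f n) (2 * (\<Sum>k=1..h. f k))"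
    unfolding split mult_2 by (rule p_cong_add [OF p_cong_refl])
  then show ?thesis
    unfolding h_def by (rule p_cong_sym)
qed

lemma sum_even_half_p_cong:
  assumes "odd p" "\<And>n. 0 < n \<Longrightarrow> n < p \<Longrightarrow> p_cong p (f (p - n)) (f n)"
  shows "p_cong p (2 * (\<Sum>k=1..(p - 1) div 2. f (2 * k))) (\<Sum>n=1..p-1. f n)"
proof -
  define h where "h = (p - 1) div 2"
  have p: "p = 2 * h + 1"
    using assms(1) by (simp add: h_def)
  have "p - 2 * (h + 1 - k) = 2 * k - 1" if "1 \<le> k" "k \<le> h" for k
    using p that by simp
  then have "(\<Sum>k=1..h. f (2 * k - 1)) = (\<Sum>k=1..h. f (p - 2 * k))"
    by (intro sum.reindex_bij_witness [where i = "\<lambda>k. h + 1 - k" and j = "\<lambda>k. h + 1 - k"]) auto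
  then have split: "(\<Sum>n=1..p-1. f n) = (\<Sum>k=1..h. f (2 * k)) + (\<Sum>k=1..h. f (p - 2 * k))"
    using sum_split_even_odd [of f h] p by simp
  have "p_cong p (\<Sum>k=1..h. f (p - 2 * k)) (\<Sum>k=1..h. f (2 * k))"
    using p by (intro p_cong_sum assms(2)) auto
  then have "p_cong p (\<Sum>n=1..p-1. f n) (2 * (\<Sum>k=1..h. f (2 * k)))"
    unfolding split mult_2 by (rule p_cong_add [OF p_cong_refl])
  then show ?thesis
    unfolding h_def by (rule p_cong_sym)
qed

end

theorem lemma3p3:
  fixes p :: nat
  assumes "prime p" and "p > 7"
  shows "rat_cong_mod
           (\<Sum>k=1..(p - 1) div 2. (2 * harm_rat (2 * k) - harm_rat k) / of_nat k ^ 4)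
           (31 / 2 * bernoulli_num (p - 5)) p"
proof -
  define f where "f n = harm_avg n / of_nat n ^ 4" for n
  define h where "h = (p - 1) div 2"
  have odd: "odd p"
    using prime_odd_nat assms by simp
  have f_reflect: "p_cong p (f (p - n)) (f n)" if "0 < n" "n < p" for n
    unfolding f_def using assms that by (intro harm_avg_div_power_reflect) auto
  have total: "p_cong p (\<Sum>n=1..p-1. f n) (bernoulli_num (p - 5))"
    unfolding f_def using sum_harm_avg_div_power_p_cong [OF assms(1), of 4] assms(2) by simp
  have even_half: "p_cong p (2 * (\<Sum>k=1..h. f (2 * k))) (bernoulli_num (p - 5))"
    using p_cong_trans [OF assms(1) sum_even_half_p_cong [OF assms(1) odd, where f = f, OF f_reflect] total]
    unfolding h_def .
  have lower_half: "p_cong p (2 * (\<Sum>k=1..h. f k)) (bernoulli_num (p - 5))"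
    using p_cong_trans [OF assms(1) sum_lower_half_p_cong [OF assms(1) odd, where f = f, OF f_reflect] total]
    unfolding h_def .
  have "(\<Sum>k=1..h. (2 * harm_rat (2 * k) - harm_rat k) / of_nat k ^ 4)
      = (\<Sum>k=1..h. 32 * f (2 * k) - f k)"
    by (intro sum.cong refl) (simp add: f_def harm_rat_double_div_power_eq)
  also have "\<dots> = 16 * (2 * (\<Sum>k=1..h. f (2 * k))) - 1 / 2 * (2 * (\<Sum>k=1..h. f k))"
    by (simp add: sum_subtractf sum_distrib_left)
  also have "p_cong p \<dots> (16 * bernoulli_num (p - 5) - 1 / 2 * bernoulli_num (p - 5))"
    using assms even_half lower_half
    by (intro p_cong_diff p_cong_mult_left p_integral_numeral p_integral_1
        p_integral_divide_of_nat [of p 1 2, simplified]) auto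
  finally show ?thesis
    unfolding h_def by (intro rat_cong_mod_if_p_cong [OF assms(1)]) simp
qed

end
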